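(* Let $(F,\mathrm{Frob})=\prod_{p\in\mathbb{P}}(\mathbb{F}_{p^{k_p}},\mathrm{Frob}_p)/\mathcal{U}$ be a member of the class $\mathcal{S}$. Then the coarse pseudofinite dimension $\pmb{\delta}_F$ with respect to $F$ takes integer values on all $\mathcal{L}_\sigma$-definable sets (with parameters) of $(F,\mathrm{Frob})$.
   Context: $\mathbb{P}$ is the set of primes; $\mathrm{Frob}_p$ is the map $x\mapsto x^p$. $\mathcal{L}_\sigma$ is the language of rings expanded by a unary function symbol $\sigma$ (interpreted by $\mathrm{Frob}_p$, resp. $\mathrm{Frob}$). For an $\mathcal{L}_\sigma$-formula $\varphi(x,y)$ without parameters and a prime $p$, $\varphi_p(x,y)$ is the ring formula obtained by replacing each occurrence of $\sigma(t)$ by $t^p$. By the theorem of Chatzidakis–van den Dries–Macintyre, for every ring formula $\psi(x,y)$ with $|x|=n$ there are a constant $C_\psi>0$ and a finite set $D_\psi\subseteq\{0,\dots,n\}\times\mathbb{R}^{>0}$ such that for every finite field $\mathbb{F}_q$ and $a\in\mathbb{F}_q^{|y|}$ with $\psi(\mathbb{F}_q^n,a)\neq\emptyset$ there is $(d,\mu)\in D_\psi$ with $\big||\psi(\mathbb{F}_q^n,a)|-\mu q^d\big|\le C_\psi q^{d-1/2}$; fix such $C_\psi,D_\psi$ for each $\psi$, and let $E_\psi=\{\mu:(d,\mu)\in D_\psi\}$. Put $N^p_{\varphi}=\max\{\mu,1/\mu,2\log_p(2C_{\varphi_p}/\mu):\mu\in E_{\varphi_p}\}$ and $f(\ell,p)=\max\{N^p_\varphi:\varphi(x,y)\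 \mathcal{L}_\sigma\text{-formula without parameters},\ |\varphi|\le\ell\}$, where $|\varphi|$ is the length of $\varphi$. The class $\mathcal{S}$ consists of all ultraproducts $\prod_{p\in\mathbb{P}}(\mathbb{F}_{p^{k_p}},\mathrm{Frob}_p)/\mathcal{U}$ with $\mathcal{U}$ a non-principal ultrafilter on $\mathbb{P}$ and $k_p\ge f(p,p)$ for all $p$. For an ultraproduct $M$ of finite structures, an internal set $D=\prod D_i/\mathcal{U}$ has nonstandard cardinality $|D|=(|D_i|)/\mathcal{U}\in\mathbb{R}^*$; for an internal set $X$ and a definable set $A$, $\pmb{\delta}_X(A)=\mathrm{st}(\log|A|/\log|X|)$ (standard part); $\pmb{\delta}_F$ is $\pmb{\delta}_X$ with $X=F$. *)

theory Defs
  imports Complex_Main "HOL-Computational_Algebra.Primes" "HOL-Algebra.Ring"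
begin

datatype trm = V nat | Zr | On | Ad trm trm | Ng trm | Ml trm trm | Sg trm

datatype fm = Eq trm trm | Neg fm | Conj fm fm | Ex nat fm

text \<open>Length of a formula: every symbol counts 1; the variable with index i
  is written with i+1 symbols (so that there are only finitely many formulas of
  bounded length).\<close>

fun tsize :: "trm \<Rightarrow> nat" where
  "tsize (V i) = i + 1"
| "tsize Zr = 1"
| "tsize On = 1"
| "tsize (Ad s t) = 1 + tsize s + tsize t"
| "tsize (Ng t) = 1 + tsize t"
| "tsize (Ml s t) = 1 + tsize s + tsize t"
| "tsize (Sg t) = 1 + tsize t"

fun fsize :: "fm \<Rightarrow> nat" where
  "fsize (Eq s t) = 1 + tsize s + tsize t"
| "fsize (Neg f) = 1 + fsize f"
| "fsize (Conj f g) = 1 + fsize f + fsize g"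
| "fsize (Ex i f) = 1 + (i + 1) + fsize f"

fun tvars :: "trm \<Rightarrow> nat set" where
  "tvars (V i) = {i}"
| "tvars Zr = {}"
| "tvars On = {}"
| "tvars (Ad s t) = tvars s \<union> tvars t"
| "tvars (Ng t) = tvars t"
| "tvars (Ml s t) = tvars s \<union> tvars t"
| "tvars (Sg t) = tvars t"

fun fv :: "fm \<Rightarrow> nat set" where
  "fv (Eq s t) = tvars s \<union> tvars t"
| "fv (Neg f) = fv f"
| "fv (Conj f g) = fv f \<union> fv g"
| "fv (Ex i f) = fv f - {i}"

fun tsigfree :: "trm \<Rightarrow> bool" where
  "tsigfree (V i) = True"
| "tsigfree Zr = True"
| "tsigfree On = True"
| "tsigfree (Ad s t) = (tsigfree s \<and> tsigfree t)"
| "tsigfree (Ng t) = tsigfree t"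
| "tsigfree (Ml s t) = (tsigfree s \<and> tsigfree t)"
| "tsigfree (Sg t) = False"

fun sigfree :: "fm \<Rightarrow> bool" where
  "sigfree (Eq s t) = (tsigfree s \<and> tsigfree t)"
| "sigfree (Neg f) = sigfree f"
| "sigfree (Conj f g) = (sigfree f \<and> sigfree g)"
| "sigfree (Ex i f) = sigfree f"

fun tpow :: "trm \<Rightarrow> nat \<Rightarrow> trm" where
  "tpow t 0 = On"
| "tpow t (Suc k) = Ml t (tpow t k)"

fun ttr :: "nat \<Rightarrow> trm \<Rightarrow> trm" where
  "ttr p (V i) = V i"
| "ttr p Zr = Zr"
| "ttr p On = On"
| "ttr p (Ad s t) = Ad (ttr p s) (ttr p t)"
| "ttr p (Ng t) = Ng (ttr p t)"
| "ttr p (Ml s t) = Ml (ttr p s) (ttr p t)"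
| "ttr p (Sg t) = tpow (ttr p t) p"

fun ftr :: "nat \<Rightarrow> fm \<Rightarrow> fm" where
  "ftr p (Eq s t) = Eq (ttr p s) (ttr p t)"
| "ftr p (Neg f) = Neg (ftr p f)"
| "ftr p (Conj f g) = Conj (ftr p f) (ftr p g)"
| "ftr p (Ex i f) = Ex i (ftr p f)"

record 'a Lstr =
  L_dom :: "'a set"
  L_zero :: 'a
  L_one :: 'a
  L_add :: "'a \<Rightarrow> 'a \<Rightarrow> 'a"
  L_neg :: "'a \<Rightarrow> 'a"
  L_mul :: "'a \<Rightarrow> 'a \<Rightarrow> 'a"
  L_sg :: "'a \<Rightarrow> 'a"

fun teval :: "'a Lstr \<Rightarrow> (nat \<Rightarrow> 'a) \<Rightarrow> trm \<Rightarrow> 'a" where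
  "teval S e (V i) = e i"
| "teval S e Zr = L_zero S"
| "teval S e On = L_one S"
| "teval S e (Ad s t) = L_add S (teval S e s) (teval S e t)"
| "teval S e (Ng t) = L_neg S (teval S e t)"
| "teval S e (Ml s t) = L_mul S (teval S e s) (teval S e t)"
| "teval S e (Sg t) = L_sg S (teval S e t)"

fun sat :: "'a Lstr \<Rightarrow> (nat \<Rightarrow> 'a) \<Rightarrow> fm \<Rightarrow> bool" where
  "sat S e (Eq s t) = (teval S e s = teval S e t)"
| "sat S e (Neg f) = (\<not> sat S e f)"
| "sat S e (Conj f g) = (sat S e f \<and> sat S e g)"
| "sat S e (Ex i f) = (\<exists>x\<in>L_dom S. sat S (e(i := x)) f)"

text \<open>environment for phi(x,y): x = variables 0..n-1, y = variables n..n+m-1\<close>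
definition envl :: "'a list \<Rightarrow> 'a list \<Rightarrow> nat \<Rightarrow> 'a" where
  "envl xs as i = (if i < length xs then xs ! i else as ! (i - length xs))"

definition defset :: "'a Lstr \<Rightarrow> fm \<Rightarrow> nat \<Rightarrow> 'a list \<Rightarrow> 'a list set" where
  "defset S \<phi> n as = {xs. length xs = n \<and> set xs \<subseteq> L_dom S \<and> sat S (envl xs as) \<phi>}"

definition fstr :: "('b, 'c) ring_scheme \<Rightarrow> ('b \<Rightarrow> 'b) \<Rightarrow> 'b Lstr" where
  "fstr R s = \<lparr>L_dom = carrier R, L_zero = \<zero>\<^bsub>R\<^esub>, L_one = \<one>\<^bsub>R\<^esub>,
     L_add = (\<oplus>\<^bsub>R\<^esub>), L_neg = a_inv R, L_mul = (\<otimes>\<^bsub>R\<^esub>), L_sg = s\<rparr>"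

text \<open>Finite fields are taken with carrier in nat (every finite
  field is isomorphic to one of these).\<close>
definition cdm_constants ::
  "(fm \<Rightarrow> nat \<Rightarrow> nat \<Rightarrow> real) \<Rightarrow> (fm \<Rightarrow> nat \<Rightarrow> nat \<Rightarrow> (nat \<times> real) set) \<Rightarrow> bool" where
  "cdm_constants C D \<longleftrightarrow>
    (\<forall>\<psi> n m. sigfree \<psi> \<and> fv \<psi> \<subseteq> {..<n+m} \<longrightarrow>
       C \<psi> n m > 0 \<and> finite (D \<psi> n m) \<and> D \<psi> n m \<subseteq> {(d, \<mu>). d \<le> n \<and> \<mu> > 0} \<and>
       (\<forall>(R :: nat ring) as. field R \<and> finite (carrier R) \<and> length as = m \<and> set as \<subseteq> carrier R \<and>
          defset (fstr R id) \<psi> n as \<noteq> {} \<longrightarrow>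
          (\<exists>(d, \<mu>) \<in> D \<psi> n m.
             \<bar>real (card (defset (fstr R id) \<psi> n as)) - \<mu> * real (card (carrier R)) ^ d\<bar>
               \<le> C \<psi> n m * real (card (carrier R)) powr (real d - 1/2))))"

text \<open>N^p_phi (max of the empty set read as 0)\<close>
definition Nval :: "(fm \<Rightarrow> nat \<Rightarrow> nat \<Rightarrow> real) \<Rightarrow> (fm \<Rightarrow> nat \<Rightarrow> nat \<Rightarrow> (nat \<times> real) set)
    \<Rightarrow> fm \<Rightarrow> nat \<Rightarrow> nat \<Rightarrow> nat \<Rightarrow> real" where
  "Nval C D \<phi> n m p =
     (let \<psi> = ftr p \<phi> in
      Max ({0} \<union> (\<Union>\<mu> \<in> snd ` D \<psi> n m.
            {\<mu>, 1 / \<mu>, 2 * log (real p) (2 * C \<psi> n m / \<mu>)})))"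

text \<open>length of phi(x,y): length of the formula plus |x| + |y|\<close>
definition fbound :: "(fm \<Rightarrow> nat \<Rightarrow> nat \<Rightarrow> real) \<Rightarrow> (fm \<Rightarrow> nat \<Rightarrow> nat \<Rightarrow> (nat \<times> real) set)
    \<Rightarrow> nat \<Rightarrow> nat \<Rightarrow> real" where
  "fbound C D l p = Max ({0} \<union> {Nval C D \<phi> n m p | \<phi> n m.
       fv \<phi> \<subseteq> {..<n+m} \<and> fsize \<phi> + n + m \<le> l})"

definition nonprincipal_ultrafilter :: "nat set set \<Rightarrow> bool" where
  "nonprincipal_ultrafilter U \<longleftrightarrow>
     UNIV \<in> U \<and> {} \<notin> U \<and> (\<forall>A B. A \<in> U \<and> B \<in> U \<longrightarrow> A \<inter> B \<in> U) \<and>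
     (\<forall>A B. A \<in> U \<and> A \<subseteq> B \<longrightarrow> B \<in> U) \<and> (\<forall>A. A \<in> U \<or> - A \<in> U) \<and>
     (\<forall>A. finite A \<longrightarrow> A \<notin> U)"

definition upG :: "(nat \<Rightarrow> nat ring) \<Rightarrow> (nat \<Rightarrow> nat) set" where
  "upG R = {g. \<forall>p. prime p \<longrightarrow> g p \<in> carrier (R p)}"

definition ucls :: "nat set set \<Rightarrow> (nat \<Rightarrow> nat ring) \<Rightarrow> (nat \<Rightarrow> nat) \<Rightarrow> (nat \<Rightarrow> nat) set" where
  "ucls U R g = {h \<in> upG R. {p. g p = h p} \<in> U}"

definition urep :: "(nat \<Rightarrow> nat) set \<Rightarrow> nat \<Rightarrow> nat" where
  "urep X = (SOME g. g \<in> X)"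

definition ustr :: "nat set set \<Rightarrow> (nat \<Rightarrow> nat ring) \<Rightarrow> (nat \<Rightarrow> nat) set Lstr" where
  "ustr U R = \<lparr>L_dom = ucls U R ` upG R,
     L_zero = ucls U R (\<lambda>p. \<zero>\<^bsub>R p\<^esub>),
     L_one = ucls U R (\<lambda>p. \<one>\<^bsub>R p\<^esub>),
     L_add = (\<lambda>X Y. ucls U R (\<lambda>p. urep X p \<oplus>\<^bsub>R p\<^esub> urep Y p)),
     L_neg = (\<lambda>X. ucls U R (\<lambda>p. \<ominus>\<^bsub>R p\<^esub> urep X p)),
     L_mul = (\<lambda>X Y. ucls U R (\<lambda>p. urep X p \<otimes>\<^bsub>R p\<^esub> urep Y p)),
     L_sg = (\<lambda>X. ucls U R (\<lambda>p. urep X p [^]\<^bsub>R p\<^esub> (p::nat)))\<rparr>"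

text \<open>D = prod_p D_p / U, an internal subset of F^n\<close>
definition internal_rep :: "nat set set \<Rightarrow> (nat \<Rightarrow> nat ring) \<Rightarrow> nat \<Rightarrow>
    (nat \<Rightarrow> nat) set list set \<Rightarrow> (nat \<Rightarrow> nat list set) \<Rightarrow> bool" where
  "internal_rep U R n A Dp \<longleftrightarrow>
     (\<forall>p. prime p \<longrightarrow> Dp p \<subseteq> {xs. length xs = n \<and> set xs \<subseteq> carrier (R p)}) \<and>
     A = {xs. length xs = n \<and> set xs \<subseteq> L_dom (ustr U R) \<and>
           (\<exists>gs. length gs = n \<and> (\<forall>i<n. gs ! i \<in> xs ! i) \<and>
                 {p. map (\<lambda>g. g p) gs \<in> Dp p} \<in> U)}"

text \<open>st(r) = s for the hyperreal represented by r\<close>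
definition st_is :: "nat set set \<Rightarrow> (nat \<Rightarrow> real) \<Rightarrow> real \<Rightarrow> bool" where
  "st_is U r s \<longleftrightarrow> (\<forall>\<epsilon>>0. {p. \<bar>r p - s\<bar> < \<epsilon>} \<in> U)"

definition delta_F_is :: "nat set set \<Rightarrow> (nat \<Rightarrow> nat ring) \<Rightarrow> nat \<Rightarrow>
    (nat \<Rightarrow> nat) set list set \<Rightarrow> real \<Rightarrow> bool" where
  "delta_F_is U R n A s \<longleftrightarrow>
     (\<exists>Dp. internal_rep U R n A Dp \<and>
        st_is U (\<lambda>p. ln (real (card (Dp p))) / ln (real (card (carrier (R p))))) s)"

end

theory Submission
  imports Defs
begin

text \<open>
  By Los's theorem, a set \<open>\<phi>(F\<^sup>n, a)\<close> definable in the ultraproduct is the internal set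
  \<open>\<Prod>\<^sub>p D\<^sub>p / U\<close>, where \<open>D\<^sub>p\<close> is defined by \<open>\<phi>\<close> in \<open>(F\<^sub>p, Frob\<^sub>p)\<close>, i.e. by the ring formula
  \<open>\<phi>\<^sub>p\<close> in \<open>F\<^sub>p\<close>. For \<open>q = p^k\<close> with \<open>k \<ge> N\<^sup>p\<^sub>\<phi>\<close>, the error term of the
  Chatzidakis--van den Dries--Macintyre estimate \<open>|D\<^sub>p| = \<mu> q^d + O(q^(d - 1/2))\<close> is at most half
  the main term and \<open>1/k \<le> \<mu> \<le> k\<close>, whence \<open>|log |D\<^sub>p| / log q - d| \<le> 2 / ln p\<close>. Only the
  finitely many values \<open>d \<le> n\<close> occur, so one of them is attained on a \<open>U\<close>-large set of
  primes, and it is the standard part of \<open>log |D\<^sub>p| / log q\<close>.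
\<close>

section \<open>Substituting the Frobenius for \<open>\<sigma>\<close>\<close>

lemma teval_cong: "(\<And>i. i \<in> tvars t \<Longrightarrow> e i = e' i) \<Longrightarrow> teval S e t = teval S e' t"
  by (induction t) auto

lemma sat_cong: "(\<And>i. i \<in> fv f \<Longrightarrow> e i = e' i) \<Longrightarrow> sat S e f = sat S e' f"
proof (induction f arbitrary: e e')
  case (Eq s t)
  then show ?case using teval_cong[of s e e' S] teval_cong[of t e e' S] by auto
next
  case (Neg f)
  have "sat S e f = sat S e' f" using Neg.prems by (intro Neg.IH) simp
  then show ?case by simp
next
  case (Conj f g)
  have "sat S e f = sat S e' f" "sat S e g = sat S e' g"
    using Conj.prems by (intro Conj.IH; simp)+
  then show ?case by simp
next
  case (Ex i f)
  have "sat S (e(i := x)) f = sat S (e'(i := x)) f" for x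
    using Ex.prems by (intro Ex.IH) auto
  then show ?case by simp
qed

lemma tsigfree_tpow: "tsigfree t \<Longrightarrow> tsigfree (tpow t k)"
  by (induction k) auto

lemma tvars_tpow_subset: "tvars (tpow t k) \<subseteq> tvars t"
  by (induction k) auto

lemma tsigfree_ttr: "tsigfree (ttr p t)"
  by (induction t) (auto intro: tsigfree_tpow)

lemma tvars_ttr_subset: "tvars (ttr p t) \<subseteq> tvars t"
  by (induction t) (use tvars_tpow_subset in fastforce)+

lemma sigfree_ftr: "sigfree (ftr p f)"
  by (induction f) (auto simp: tsigfree_ttr)

lemma fv_ftr_subset: "fv (ftr p f) \<subseteq> fv f"
  by (induction f) (use tvars_ttr_subset in fastforce)+

lemma L_dom_fstr [simp]: "L_dom (fstr R s) = carrier R"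
  by (simp add: fstr_def)

definition frob_str :: "('a, 'b) ring_scheme \<Rightarrow> nat \<Rightarrow> 'a Lstr" where
  "frob_str F p = fstr F (\<lambda>x. x [^]\<^bsub>F\<^esub> p)"

lemma L_dom_frob_str [simp]: "L_dom (frob_str F p) = carrier F"
  by (simp add: frob_str_def)

lemma teval_fstr_closed:
  assumes "ring R" "\<And>x. x \<in> carrier R \<Longrightarrow> s x \<in> carrier R"
    "\<And>i. i \<in> tvars t \<Longrightarrow> e i \<in> carrier R"
  shows "teval (fstr R s) e t \<in> carrier R"
  using assms(3)
proof (induction t)
  case (Sg t)
  then show ?case using assms(2) by (simp add: fstr_def)
qed (use assms(1) in \<open>auto simp: fstr_def ring.ring_simprules\<close>)

lemma teval_tpow:
  assumes "monoid R" "teval (fstr R s) e t \<in> carrier R"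
  shows "teval (fstr R s) e (tpow t k) = teval (fstr R s) e t [^]\<^bsub>R\<^esub> k"
proof (induction k)
  case (Suc k)
  then show ?case using monoid.nat_pow_Suc2[OF assms] by (simp add: fstr_def)
qed (simp add: fstr_def)

lemma teval_ttr:
  assumes "ring R" "\<And>i. i \<in> tvars t \<Longrightarrow> e i \<in> carrier R"
  shows "teval (fstr R s) e (ttr p t) = teval (frob_str R p) e t"
  using assms(2)
proof (induction t)
  case (Sg t)
  have closed: "teval (frob_str R p) e t \<in> carrier R"
    unfolding frob_str_def using Sg.prems
    by (intro teval_fstr_closed[OF assms(1)])
      (auto intro: monoid.nat_pow_closed[OF ring.is_monoid[OF assms(1)]])
  have "teval (fstr R s) e (ttr p (Sg t)) = teval (frob_str R p) e t [^]\<^bsub>R\<^esub> p"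
    using teval_tpow[OF ring.is_monoid[OF assms(1)]] closed Sg by simp
  then show ?case by (simp add: frob_str_def fstr_def)
qed (auto simp: fstr_def frob_str_def)

lemma sat_ftr:
  assumes "ring R" "\<And>i. i \<in> fv f \<Longrightarrow> e i \<in> carrier R"
  shows "sat (fstr R s) e (ftr p f) = sat (frob_str R p) e f"
  using assms(2)
proof (induction f arbitrary: e)
  case (Eq t t')
  then show ?case using teval_ttr[OF assms(1)] by simp
next
  case (Ex i f)
  have "sat (fstr R s) (e(i := x)) (ftr p f) = sat (frob_str R p) (e(i := x)) f"
    if "x \<in> carrier R" for x
    using that Ex.prems by (intro Ex.IH) auto
  then show ?case by simp
qed auto

lemma defset_ftr:
  assumes "ring R" "fv \<phi> \<subseteq> {..<n + length as}" "set as \<subseteq> carrier R"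
  shows "defset (fstr R s) (ftr p \<phi>) n as = defset (frob_str R p) \<phi> n as"
proof -
  have "sat (fstr R s) (envl xs as) (ftr p \<phi>) = sat (frob_str R p) (envl xs as) \<phi>"
    if "length xs = n" "set xs \<subseteq> carrier R" for xs
    using assms(2,3) that
    by (intro sat_ftr[OF assms(1)]) (force simp: envl_def intro: nth_mem)
  then show ?thesis by (auto simp: defset_def)
qed

section \<open>Counting in finite fields\<close>

lemma finite_tsize_le: "finite {t. tsize t \<le> l}"
proof (induction l)
  case 0
  have "\<not> tsize t \<le> 0" for t by (cases t) auto
  then show ?case by (simp only: empty_def[symmetric] finite.emptyI)
next
  case (Suc l)
  let ?S = "{t. tsize t \<le> l}"
  let ?B = "V ` {..l} \<union> {Zr, On} \<union> case_prod Ad ` (?S \<times> ?S) \<union> Ng ` ?S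
    \<union> case_prod Ml ` (?S \<times> ?S) \<union> Sg ` ?S"
  have "{t. tsize t \<le> Suc l} \<subseteq> ?B"
  proof
    fix t assume "t \<in> {t. tsize t \<le> Suc l}"
    then show "t \<in> ?B" by (cases t) (auto intro: image_eqI[where x="(a, b)" for a b])
  qed
  moreover have "finite ?B" using Suc by simp
  ultimately show ?case by (rule finite_subset)
qed

lemma finite_fsize_le: "finite {f. fsize f \<le> l}"
proof (induction l)
  case 0
  have "\<not> fsize f \<le> 0" for f by (cases f) auto
  then show ?case by (simp only: empty_def[symmetric] finite.emptyI)
next
  case (Suc l)
  let ?S = "{f. fsize f \<le> l}" and ?T = "{t. tsize t \<le> l}"
  let ?B = "case_prod Eq ` (?T \<times> ?T) \<union> Neg ` ?S \<union> case_prod Conj ` (?S \<times> ?S)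
    \<union> case_prod Ex ` ({..l} \<times> ?S)"
  have "{f. fsize f \<le> Suc l} \<subseteq> ?B"
  proof
    fix f assume "f \<in> {f. fsize f \<le> Suc l}"
    then show "f \<in> ?B" by (cases f) (auto intro: image_eqI[where x="(a, b)" for a b])
  qed
  moreover have "finite ?B" using Suc finite_tsize_le by simp
  ultimately show ?case by (rule finite_subset)
qed

lemma Nval_le_fbound:
  assumes "fv \<phi> \<subseteq> {..<n + m}" "fsize \<phi> + n + m \<le> l"
  shows "Nval C D \<phi> n m p \<le> fbound C D l p"
proof -
  have "{Nval C D \<phi> n m p | \<phi> n m. fv \<phi> \<subseteq> {..<n + m} \<and> fsize \<phi> + n + m \<le> l}
      \<subseteq> (\<lambda>(\<phi>, n, m). Nval C D \<phi> n m p) ` ({f. fsize f \<le> l} \<times> {..l} \<times> {..l})"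
    by force
  then have "finite {Nval C D \<phi> n m p | \<phi> n m. fv \<phi> \<subseteq> {..<n + m} \<and> fsize \<phi> + n + m \<le> l}"
    by (rule finite_subset) (use finite_fsize_le in blast)
  then show ?thesis
    unfolding fbound_def by (intro Max_ge) (use assms in auto)
qed

lemma le_Nval:
  assumes "finite (D (ftr p \<phi>) n m)" "(d, \<mu>) \<in> D (ftr p \<phi>) n m"
  shows "\<mu> \<le> Nval C D \<phi> n m p" "1 / \<mu> \<le> Nval C D \<phi> n m p"
    "2 * log (real p) (2 * C (ftr p \<phi>) n m / \<mu>) \<le> Nval C D \<phi> n m p"
proof -
  have "\<mu> \<in> snd ` D (ftr p \<phi>) n m" using assms(2) by force
  then show "\<mu> \<le> Nval C D \<phi> n m p" "1 / \<mu> \<le> Nval C D \<phi> n m p"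
    "2 * log (real p) (2 * C (ftr p \<phi>) n m / \<mu>) \<le> Nval C D \<phi> n m p"
    unfolding Nval_def Let_def using assms(1) by (auto intro!: Max_ge)
qed

lemma powr_half_ge_if_log_le:
  fixes b x :: real and k :: nat
  assumes "b > 1" "x > 0" "2 * log b x \<le> k"
  shows "x \<le> (b ^ k) powr (1/2)"
proof -
  have "x = b powr log b x" using assms by simp
  also have "\<dots> \<le> b powr (k / 2)" using assms by (intro powr_mono) auto
  also have "\<dots> = (b ^ k) powr (1/2)" using assms by (simp add: powr_powr powr_realpow[symmetric])
  finally show ?thesis .
qed

lemma cdm_error_le_half_main_term:
  fixes p k d :: nat and C \<mu> :: real
  assumes "p > 1" "\<mu> > 0" "C > 0" "2 * log p (2 * C / \<mu>) \<le> k"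
  shows "C * real (p ^ k) powr (real d - 1/2) \<le> \<mu> * real (p ^ k) ^ d / 2"
proof -
  define q where "q = real p ^ k"
  have "q \<ge> 1" using assms(1) unfolding q_def by simp
  have "2 * C / \<mu> \<le> q powr (1/2)"
    unfolding q_def using assms by (intro powr_half_ge_if_log_le) auto
  then have "C \<le> \<mu> * q powr (1/2) / 2" using assms(2) by (simp add: field_simps)
  then have "C * q ^ d / q powr (1/2) \<le> \<mu> * q ^ d / 2"
    using \<open>q \<ge> 1\<close> by (simp add: field_simps)
  moreover have "q powr (real d - 1/2) = q ^ d / q powr (1/2)"
    using \<open>q \<ge> 1\<close> by (simp add: powr_diff powr_realpow)
  ultimately show ?thesis unfolding q_def by simp
qed

lemma abs_ln_le_if_bounds:
  fixes r K :: real
  assumes "K \<ge> 1" "1 / K \<le> r" "r \<le> K"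
  shows "\<bar>ln r\<bar> \<le> K"
proof -
  have "0 < 1 / K" using assms(1) by simp
  then have "r > 0" using assms(2) by linarith
  have "- ln K = ln (1 / K)" using assms(1) by (simp add: ln_div)
  also have "\<dots> \<le> ln r" using \<open>0 < 1 / K\<close> \<open>r > 0\<close> assms(2) by simp
  finally have "- ln K \<le> ln r" .
  moreover have "ln r \<le> ln K" using assms(3) \<open>r > 0\<close> by simp
  moreover have "ln K \<le> K" using assms(1) ln_le_minus_one[of K] by linarith
  ultimately show ?thesis by linarith
qed

lemma ln_ratio_near_exponent:
  fixes p k d :: nat and c \<mu> :: real
  assumes "p > 1" "\<mu> > 0" "\<mu> \<le> k" "1 / \<mu> \<le> k"
    and close: "\<bar>c - \<mu> * real (p ^ k) ^ d\<bar> \<le> \<mu> * real (p ^ k) ^ d / 2"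
  shows "\<bar>ln c / ln (real (p ^ k)) - d\<bar> \<le> 2 / ln p"
proof -
  define q where "q = real (p ^ k)"
  define r where "r = c / q ^ d"
  have "k \<ge> 1" using assms(2,4) by (cases k) auto
  then have "q > 1" unfolding q_def using assms(1) by simp
  have "\<mu> / 2 \<le> r" "r \<le> 3 * \<mu> / 2"
    using close \<open>q > 1\<close> unfolding r_def q_def[symmetric] abs_le_iff
    by (simp_all add: field_simps)
  moreover have "1 / k \<le> \<mu>" using assms(2,4) \<open>k \<ge> 1\<close> by (simp add: field_simps)
  ultimately have "1 / (2 * k) \<le> r" "r \<le> 2 * k" using assms(3) by (simp_all add: field_simps)
  then have "\<bar>ln r\<bar> \<le> 2 * k" using \<open>k \<ge> 1\<close> by (intro abs_ln_le_if_bounds) auto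
  have "r > 0" using \<open>\<mu> / 2 \<le> r\<close> assms(2) by linarith
  moreover have "q ^ d > 0" using \<open>q > 1\<close> by simp
  moreover have "c = r * q ^ d" using \<open>q > 1\<close> unfolding r_def by simp
  ultimately have "c > 0" by simp
  have ln_q: "ln q = k * ln p" unfolding q_def by (simp add: ln_realpow)
  have "ln c = ln r + d * ln q"
    unfolding r_def using \<open>c > 0\<close> \<open>q > 1\<close> by (simp add: ln_div ln_realpow)
  then have "\<bar>ln c / ln q - d\<bar> = \<bar>ln r\<bar> / (k * ln p)"
    using ln_q \<open>q > 1\<close> \<open>k \<ge> 1\<close> assms(1) by (simp add: field_simps)
  also have "\<dots> \<le> 2 * k / (k * ln p)"
    using \<open>\<bar>ln r\<bar> \<le> 2 * k\<close> assms(1) \<open>k \<ge> 1\<close> by (intro divide_right_mono) auto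
  also have "\<dots> = 2 / ln p" using \<open>k \<ge> 1\<close> by simp
  finally show ?thesis unfolding q_def .
qed

lemma two_div_ln_tendsto_0: "(\<lambda>p. 2 / ln (real p)) \<longlonglongrightarrow> 0"
  by (intro tendsto_divide_0[OF tendsto_const] filterlim_at_top_imp_at_infinity
      filterlim_compose[OF ln_at_top filterlim_real_sequentially])

lemma cdm_constantsD:
  fixes F :: "nat ring"
  assumes "cdm_constants C D" "sigfree \<psi>" "fv \<psi> \<subseteq> {..<n + m}"
  shows "C \<psi> n m > 0" "finite (D \<psi> n m)" "D \<psi> n m \<subseteq> {(d, \<mu>). d \<le> n \<and> \<mu> > 0}"
    and "field F \<Longrightarrow> finite (carrier F) \<Longrightarrow> length as = m \<Longrightarrow> set as \<subseteq> carrier F \<Longrightarrow>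
      defset (fstr F id) \<psi> n as \<noteq> {} \<Longrightarrow>
      \<exists>(d, \<mu>) \<in> D \<psi> n m. \<bar>real (card (defset (fstr F id) \<psi> n as)) - \<mu> * real (card (carrier F)) ^ d\<bar>
        \<le> C \<psi> n m * real (card (carrier F)) powr (real d - 1/2)"
  using assms unfolding cdm_constants_def by blast+

lemma log_card_defset_near_integer:
  fixes F :: "nat ring"
  assumes cdm: "cdm_constants C D"
    and F: "field F" "card (carrier F) = p ^ k" "prime p"
    and \<phi>: "fv \<phi> \<subseteq> {..<n + length as}" "fsize \<phi> + n + length as \<le> l"
    and k: "fbound C D l p \<le> k"
    and as: "set as \<subseteq> carrier F"
    and nonempty: "defset (frob_str F p) \<phi> n as \<noteq> {}"
  shows "\<exists>d\<le>n. \<bar>ln (card (defset (frob_str F p) \<phi> n as)) / ln (card (carrier F)) - real d\<bar>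
    \<le> 2 / ln p"
proof -
  let ?\<psi> = "ftr p \<phi>" and ?m = "length as" and ?A = "defset (frob_str F p) \<phi> n as"
  have "p > 1" using F(3) prime_gt_1_nat by blast
  have \<psi>: "sigfree ?\<psi>" "fv ?\<psi> \<subseteq> {..<n + ?m}"
    using sigfree_ftr fv_ftr_subset[of p \<phi>] \<phi>(1) by auto
  have A: "defset (fstr F id) ?\<psi> n as = ?A"
    using field.is_ring[OF F(1)] \<phi>(1) as by (rule defset_ftr)
  have "card (carrier F) > 0" using F(2,3) prime_gt_0_nat by simp
  then have "finite (carrier F)" by (rule card_ge_0_finite)
  then obtain d \<mu> where d\<mu>: "(d, \<mu>) \<in> D ?\<psi> n ?m"
    and estimate: "\<bar>real (card ?A) - \<mu> * real (p ^ k) ^ d\<bar>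
      \<le> C ?\<psi> n ?m * real (p ^ k) powr (real d - 1/2)"
    using cdm_constantsD(4)[OF cdm \<psi>, of F as] F(1,2) as nonempty A by auto
  have "d \<le> n" "\<mu> > 0" using cdm_constantsD(3)[OF cdm \<psi>] d\<mu> by auto
  have "Nval C D \<phi> n ?m p \<le> k" using Nval_le_fbound[OF \<phi>, of C D p] k by linarith
  then have "\<mu> \<le> k" "1 / \<mu> \<le> k" "2 * log p (2 * C ?\<psi> n ?m / \<mu>) \<le> k"
    using le_Nval[where C = C and D = D and p = p and \<phi> = \<phi>, OF cdm_constantsD(2)[OF cdm \<psi>] d\<mu>]
    by (meson order_trans)+
  then have "C ?\<psi> n ?m * real (p ^ k) powr (real d - 1/2) \<le> \<mu> * real (p ^ k) ^ d / 2"
    using \<open>p > 1\<close> \<open>\<mu> > 0\<close> cdm_constantsD(1)[OF cdm \<psi>] by (intro cdm_error_le_half_main_term)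
  then have "\<bar>ln (card ?A) / ln (real (p ^ k)) - d\<bar> \<le> 2 / ln p"
    using estimate \<open>p > 1\<close> \<open>\<mu> > 0\<close> \<open>\<mu> \<le> k\<close> \<open>1 / \<mu> \<le> k\<close> by (intro ln_ratio_near_exponent) auto
  then show ?thesis unfolding F(2) using \<open>d \<le> n\<close> by blast
qed

section \<open>Ultrafilters and standard parts\<close>

locale nonprincipal_uf =
  fixes U :: "nat set set"
  assumes nonprincipal: "nonprincipal_ultrafilter U"
begin

lemma empty_notin_U: "{} \<notin> U"
  using nonprincipal by (simp add: nonprincipal_ultrafilter_def)

lemma U_int: "A \<in> U \<Longrightarrow> B \<in> U \<Longrightarrow> A \<inter> B \<in> U"
  using nonprincipal by (simp add: nonprincipal_ultrafilter_def)

lemma U_mono: "A \<in> U \<Longrightarrow> A \<subseteq> B \<Longrightarrow> B \<in> U"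
  using nonprincipal unfolding nonprincipal_ultrafilter_def by blast

lemma U_int_subset: "A \<in> U \<Longrightarrow> B \<in> U \<Longrightarrow> A \<inter> B \<subseteq> C \<Longrightarrow> C \<in> U"
  by (rule U_mono[OF U_int])

lemma Compl_in_U_iff: "- A \<in> U \<longleftrightarrow> A \<notin> U"
proof
  assume "- A \<in> U"
  then show "A \<notin> U"
    using U_int[of A "- A"] nonprincipal by (auto simp: nonprincipal_ultrafilter_def)
qed (use nonprincipal in \<open>auto simp: nonprincipal_ultrafilter_def\<close>)

lemma Compl_finite_in_U: "finite A \<Longrightarrow> - A \<in> U"
  using nonprincipal by (simp add: Compl_in_U_iff nonprincipal_ultrafilter_def)

lemma Collect_in_U_cong:
  "A \<in> U \<Longrightarrow> (\<And>p. p \<in> A \<Longrightarrow> P p \<longleftrightarrow> Q p) \<Longrightarrow> {p. P p} \<in> U \<longleftrightarrow> {p. Q p} \<in> U"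
  using U_int_subset[of A "{p. P p}" "{p. Q p}"] U_int_subset[of A "{p. Q p}" "{p. P p}"] by blast

lemma Collect_conj_in_U_iff: "{p. P p \<and> Q p} \<in> U \<longleftrightarrow> {p. P p} \<in> U \<and> {p. Q p} \<in> U"
  using U_int[of "{p. P p}" "{p. Q p}"] U_mono by (auto simp: Collect_conj_eq)

lemma finite_UN_in_U:
  assumes "finite I" "(\<Union>i\<in>I. B i) \<in> U"
  shows "\<exists>i\<in>I. B i \<in> U"
  using assms
proof (induction I rule: finite_induct)
  case empty
  then show ?case using empty_notin_U by simp
next
  case (insert j I)
  show ?case
  proof (cases "B j \<in> U")
    case False
    then have "(\<Union>i\<in>insert j I. B i) \<inter> - B j \<in> U"
      using insert.prems by (intro U_int) (simp_all add: Compl_in_U_iff)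
    then have "(\<Union>i\<in>I. B i) \<in> U" by (rule U_mono) blast
    then show ?thesis using insert.IH by blast
  qed simp
qed

lemma st_is_if_close:
  assumes "f \<longlonglongrightarrow> 0" "{p. \<bar>r p - s\<bar> \<le> f p} \<in> U"
  shows "st_is U r s"
  unfolding st_is_def
proof (intro allI impI)
  fix \<epsilon> :: real assume "\<epsilon> > 0"
  then obtain N where N: "\<And>p. p \<ge> N \<Longrightarrow> f p < \<epsilon>"
    using assms(1) order_tendstoD(2)[of f 0 sequentially \<epsilon>] by (auto simp: eventually_sequentially)
  have "{p. \<bar>r p - s\<bar> \<le> f p} \<inter> - {..<N} \<subseteq> {p. \<bar>r p - s\<bar> < \<epsilon>}"
  proof
    fix p assume "p \<in> {p. \<bar>r p - s\<bar> \<le> f p} \<inter> - {..<N}"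
    then have "\<bar>r p - s\<bar> \<le> f p" "f p < \<epsilon>" using N by auto
    then show "p \<in> {p. \<bar>r p - s\<bar> < \<epsilon>}" by simp
  qed
  then show "{p. \<bar>r p - s\<bar> < \<epsilon>} \<in> U"
    by (rule U_int_subset[OF assms(2) Compl_finite_in_U[OF finite_lessThan]])
qed

end

section \<open>Los's theorem for the ultraproduct\<close>

definition factor_defset ::
    "(nat \<Rightarrow> nat ring) \<Rightarrow> fm \<Rightarrow> nat \<Rightarrow> (nat \<Rightarrow> nat) set list \<Rightarrow> nat \<Rightarrow> nat list set" where
  "factor_defset R \<phi> n as p = defset (frob_str (R p) p) \<phi> n (map (\<lambda>X. urep X p) as)"

locale ultraproduct = nonprincipal_uf +
  fixes R :: "nat \<Rightarrow> nat ring"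
  assumes primes_in_U: "{p. prime p} \<in> U"
    and ring_factor: "prime p \<Longrightarrow> ring (R p)"
begin

lemma L_dom_ustr: "L_dom (ustr U R) = ucls U R ` upG R"
  by (simp add: ustr_def)

lemma ucls_self: "g \<in> upG R \<Longrightarrow> g \<in> ucls U R g"
  using nonprincipal by (simp add: ucls_def nonprincipal_ultrafilter_def)

lemma ucls_eq_iff:
  assumes "a \<in> upG R" "b \<in> upG R"
  shows "ucls U R a = ucls U R b \<longleftrightarrow> {p. a p = b p} \<in> U"
proof
  assume "ucls U R a = ucls U R b"
  then have "b \<in> ucls U R a" using ucls_self[OF assms(2)] by simp
  then show "{p. a p = b p} \<in> U" by (simp add: ucls_def)
next
  assume ab: "{p. a p = b p} \<in> U"
  have "{p. a p = h p} \<in> U \<longleftrightarrow> {p. b p = h p} \<in> U" for h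
  proof
    assume "{p. a p = h p} \<in> U"
    then show "{p. b p = h p} \<in> U" by (rule U_int_subset[OF ab]) auto
  next
    assume "{p. b p = h p} \<in> U"
    then show "{p. a p = h p} \<in> U" by (rule U_int_subset[OF ab]) auto
  qed
  then show "ucls U R a = ucls U R b" by (auto simp: ucls_def)
qed

lemma in_L_dom_ustrD:
  assumes "X \<in> L_dom (ustr U R)" "h \<in> X"
  shows "h \<in> upG R" "ucls U R h = X"
proof -
  obtain g where g: "g \<in> upG R" "X = ucls U R g" using assms(1) by (auto simp: L_dom_ustr)
  then show h: "h \<in> upG R" using assms(2) by (simp add: ucls_def)
  show "ucls U R h = X" using assms(2) g ucls_eq_iff[OF g(1) h] by (simp add: ucls_def)
qed

lemma urep_in:
  assumes "X \<in> L_dom (ustr U R)"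
  shows "urep X \<in> X"
proof -
  obtain g where "g \<in> upG R" "X = ucls U R g" using assms by (auto simp: L_dom_ustr)
  then have "g \<in> X" by (simp add: ucls_self)
  then show ?thesis unfolding urep_def by (rule someI[where P = "\<lambda>h. h \<in> X"])
qed

lemma urep_in_carrier: "X \<in> L_dom (ustr U R) \<Longrightarrow> prime p \<Longrightarrow> urep X p \<in> carrier (R p)"
  using in_L_dom_ustrD(1)[OF _ urep_in] by (simp add: upG_def)

lemma urep_ucls:
  assumes "g \<in> upG R"
  shows "urep (ucls U R g) \<in> upG R" "{p. urep (ucls U R g) p = g p} \<in> U"
proof -
  have "ucls U R g \<in> L_dom (ustr U R)" using assms by (simp add: L_dom_ustr)
  then have "urep (ucls U R g) \<in> ucls U R g" by (rule urep_in)
  then show "urep (ucls U R g) \<in> upG R" "{p. urep (ucls U R g) p = g p} \<in> U"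
    by (simp_all add: ucls_def eq_commute)
qed

lemma ucls_lift2:
  assumes "a \<in> upG R" "b \<in> upG R"
    and closed: "\<And>p x y. prime p \<Longrightarrow> x \<in> carrier (R p) \<Longrightarrow> y \<in> carrier (R p) \<Longrightarrow>
      f p x y \<in> carrier (R p)"
  shows "(\<lambda>p. f p (a p) (b p)) \<in> upG R"
    "ucls U R (\<lambda>p. f p (urep (ucls U R a) p) (urep (ucls U R b) p)) =
      ucls U R (\<lambda>p. f p (a p) (b p))"
proof -
  note ua = urep_ucls[OF assms(1)] and ub = urep_ucls[OF assms(2)]
  show "(\<lambda>p. f p (a p) (b p)) \<in> upG R" using assms closed by (simp add: upG_def)
  moreover have "(\<lambda>p. f p (urep (ucls U R a) p) (urep (ucls U R b) p)) \<in> upG R"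
    using ua(1) ub(1) closed by (simp add: upG_def)
  moreover have "{p. f p (urep (ucls U R a) p) (urep (ucls U R b) p) = f p (a p) (b p)} \<in> U"
    by (rule U_int_subset[OF ua(2) ub(2)]) auto
  ultimately show "ucls U R (\<lambda>p. f p (urep (ucls U R a) p) (urep (ucls U R b) p)) =
      ucls U R (\<lambda>p. f p (a p) (b p))"
    by (simp add: ucls_eq_iff)
qed

lemma ucls_lift1:
  assumes "a \<in> upG R"
    and closed: "\<And>p x. prime p \<Longrightarrow> x \<in> carrier (R p) \<Longrightarrow> f p x \<in> carrier (R p)"
  shows "(\<lambda>p. f p (a p)) \<in> upG R"
    "ucls U R (\<lambda>p. f p (urep (ucls U R a) p)) = ucls U R (\<lambda>p. f p (a p))"
  using ucls_lift2[OF assms(1) assms(1), of "\<lambda>p x y. f p x"] closed by simp_all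

lemma ring_closed:
  assumes "prime p"
  shows "\<zero>\<^bsub>R p\<^esub> \<in> carrier (R p)" "\<one>\<^bsub>R p\<^esub> \<in> carrier (R p)"
    "x \<in> carrier (R p) \<Longrightarrow> y \<in> carrier (R p) \<Longrightarrow> x \<oplus>\<^bsub>R p\<^esub> y \<in> carrier (R p)"
    "x \<in> carrier (R p) \<Longrightarrow> y \<in> carrier (R p) \<Longrightarrow> x \<otimes>\<^bsub>R p\<^esub> y \<in> carrier (R p)"
    "x \<in> carrier (R p) \<Longrightarrow> \<ominus>\<^bsub>R p\<^esub> x \<in> carrier (R p)"
    "x \<in> carrier (R p) \<Longrightarrow> x [^]\<^bsub>R p\<^esub> (j::nat) \<in> carrier (R p)"
  using ring_factor[OF assms]
  by (simp_all add: ring.ring_simprules monoid.nat_pow_closed ring.is_monoid)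

lemma teval_ustr:
  assumes "\<And>i. i \<in> tvars t \<Longrightarrow> G i \<in> upG R"
  shows "(\<lambda>p. teval (frob_str (R p) p) (\<lambda>i. G i p) t) \<in> upG R \<and>
    teval (ustr U R) (\<lambda>i. ucls U R (G i)) t = ucls U R (\<lambda>p. teval (frob_str (R p) p) (\<lambda>i. G i p) t)"
  using assms
proof (induction t)
  case Zr
  then show ?case using ring_closed(1) by (simp add: upG_def frob_str_def fstr_def ustr_def)
next
  case On
  then show ?case using ring_closed(2) by (simp add: upG_def frob_str_def fstr_def ustr_def)
next
  case (Ad s t)
  then show ?case
    using ucls_lift2[of "\<lambda>p. teval (frob_str (R p) p) (\<lambda>i. G i p) s"
        "\<lambda>p. teval (frob_str (R p) p) (\<lambda>i. G i p) t" "\<lambda>p x y. x \<oplus>\<^bsub>R p\<^esub> y"] ring_closed(3)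
    by (simp add: frob_str_def fstr_def ustr_def)
next
  case (Ml s t)
  then show ?case
    using ucls_lift2[of "\<lambda>p. teval (frob_str (R p) p) (\<lambda>i. G i p) s"
        "\<lambda>p. teval (frob_str (R p) p) (\<lambda>i. G i p) t" "\<lambda>p x y. x \<otimes>\<^bsub>R p\<^esub> y"] ring_closed(4)
    by (simp add: frob_str_def fstr_def ustr_def)
next
  case (Ng t)
  then show ?case
    using ucls_lift1[of "\<lambda>p. teval (frob_str (R p) p) (\<lambda>i. G i p) t" "\<lambda>p x. \<ominus>\<^bsub>R p\<^esub> x"]
      ring_closed(5)
    by (simp add: frob_str_def fstr_def ustr_def)
next
  case (Sg t)
  then show ?case
    using ucls_lift1[of "\<lambda>p. teval (frob_str (R p) p) (\<lambda>i. G i p) t" "\<lambda>p x. x [^]\<^bsub>R p\<^esub> p"]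
      ring_closed(6)
    by (simp add: frob_str_def fstr_def ustr_def)
qed simp

theorem los:
  assumes "\<And>i. i \<in> fv \<phi> \<Longrightarrow> G i \<in> upG R"
  shows "sat (ustr U R) (\<lambda>i. ucls U R (G i)) \<phi> \<longleftrightarrow>
    {p. sat (frob_str (R p) p) (\<lambda>i. G i p) \<phi>} \<in> U"
  using assms
proof (induction \<phi> arbitrary: G)
  case (Eq s t)
  then show ?case using teval_ustr[of s G] teval_ustr[of t G] by (simp add: ucls_eq_iff)
next
  case (Neg f)
  then show ?case using Compl_in_U_iff[of "{p. sat (frob_str (R p) p) (\<lambda>i. G i p) f}"]
    by (simp add: Compl_eq)
next
  case (Conj f g)
  then show ?case by (simp add: Collect_conj_in_U_iff)
next
  case (Ex i f)
  let ?sat = "\<lambda>p x. sat (frob_str (R p) p) ((\<lambda>j. G j p)(i := x)) f"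
  have IH: "sat (ustr U R) ((\<lambda>j. ucls U R (G j))(i := ucls U R g)) f \<longleftrightarrow> {p. ?sat p (g p)} \<in> U"
    if "g \<in> upG R" for g
  proof -
    have "sat (ustr U R) (\<lambda>j. ucls U R ((G(i := g)) j)) f \<longleftrightarrow>
        {p. sat (frob_str (R p) p) (\<lambda>j. (G(i := g)) j p) f} \<in> U"
      using Ex.prems that by (intro Ex.IH) auto
    moreover have "(\<lambda>j. ucls U R ((G(i := g)) j)) = (\<lambda>j. ucls U R (G j))(i := ucls U R g)"
      by (rule ext) simp
    moreover have "(\<lambda>j. (G(i := g)) j p) = (\<lambda>j. G j p)(i := g p)" for p
      by (rule ext) simp
    ultimately show ?thesis by simp
  qed
  show ?case
  proof
    assume "sat (ustr U R) (\<lambda>i. ucls U R (G i)) (Ex i f)"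
    then obtain g where g: "g \<in> upG R" "{p. ?sat p (g p)} \<in> U"
      using IH by (auto simp: L_dom_ustr)
    have "{p. prime p} \<inter> {p. ?sat p (g p)} \<subseteq> {p. sat (frob_str (R p) p) (\<lambda>i. G i p) (Ex i f)}"
      using g(1) by (auto simp: upG_def)
    then show "{p. sat (frob_str (R p) p) (\<lambda>i. G i p) (Ex i f)} \<in> U"
      using primes_in_U g(2) by (rule U_int_subset[rotated 2])
  next
    assume sat_Ex: "{p. sat (frob_str (R p) p) (\<lambda>i. G i p) (Ex i f)} \<in> U"
    \<comment> \<open>a witness where one exists, and an arbitrary element of the carrier elsewhere\<close>
    define g where "g p = (SOME x. x \<in> carrier (R p) \<and>
        (sat (frob_str (R p) p) (\<lambda>i. G i p) (Ex i f) \<longrightarrow> ?sat p x))" for p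
    have "\<exists>x. x \<in> carrier (R p) \<and> (sat (frob_str (R p) p) (\<lambda>i. G i p) (Ex i f) \<longrightarrow> ?sat p x)"
      if "prime p \<or> sat (frob_str (R p) p) (\<lambda>i. G i p) (Ex i f)" for p
      using that ring_closed(1) by auto
    then have g: "prime p \<or> sat (frob_str (R p) p) (\<lambda>i. G i p) (Ex i f) \<Longrightarrow>
        g p \<in> carrier (R p) \<and> (sat (frob_str (R p) p) (\<lambda>i. G i p) (Ex i f) \<longrightarrow> ?sat p (g p))" for p
      unfolding g_def by (rule someI_ex)
    then have "g \<in> upG R" by (simp add: upG_def)
    moreover have "{p. ?sat p (g p)} \<in> U"
      using sat_Ex by (rule U_mono) (use g in blast)
    ultimately show "sat (ustr U R) (\<lambda>i. ucls U R (G i)) (Ex i f)"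
      using IH by (auto simp: L_dom_ustr)
  qed
qed

lemma sat_ustr_iff_factor_defset:
  assumes fv: "fv \<phi> \<subseteq> {..<n + length as}" and as: "set as \<subseteq> L_dom (ustr U R)"
    and xs: "length xs = n" "set xs \<subseteq> L_dom (ustr U R)"
    and gs: "length gs = n" "\<And>i. i < n \<Longrightarrow> gs ! i \<in> xs ! i"
  shows "sat (ustr U R) (envl xs as) \<phi> \<longleftrightarrow>
    {p. map (\<lambda>g. g p) gs \<in> factor_defset R \<phi> n as p} \<in> U"
proof -
  define G where "G j = (if j < n then gs ! j else urep (as ! (j - n)))" for j
  have G: "G j \<in> upG R" "ucls U R (G j) = envl xs as j" if "j < n + length as" for j
  proof -
    have "envl xs as j \<in> L_dom (ustr U R)"
      using that xs as by (force simp: envl_def intro: nth_mem)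
    moreover have "G j \<in> envl xs as j"
      using gs(2) urep_in[OF calculation] xs(1) by (simp add: G_def envl_def split: if_splits)
    ultimately show "G j \<in> upG R" "ucls U R (G j) = envl xs as j" by (rule in_L_dom_ustrD)+
  qed
  have factor: "sat (frob_str (R p) p) (\<lambda>j. G j p) \<phi> \<longleftrightarrow>
      map (\<lambda>g. g p) gs \<in> factor_defset R \<phi> n as p" if "prime p" for p
  proof -
    have "set (map (\<lambda>g. g p) gs) \<subseteq> carrier (R p)"
    proof
      fix x assume "x \<in> set (map (\<lambda>g. g p) gs)"
      then obtain i where "i < n" "x = (gs ! i) p" using gs(1) by (auto simp: in_set_conv_nth)
      moreover have "G i \<in> upG R" using G(1) \<open>i < n\<close> by simp
      ultimately show "x \<in> carrier (R p)" using that by (simp add: G_def upG_def)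
    qed
    moreover have "sat (frob_str (R p) p) (\<lambda>j. G j p) \<phi> \<longleftrightarrow>
        sat (frob_str (R p) p) (envl (map (\<lambda>g. g p) gs) (map (\<lambda>X. urep X p) as)) \<phi>"
      using fv gs(1) by (intro sat_cong) (auto simp: G_def envl_def)
    ultimately show ?thesis using gs(1) by (simp add: factor_defset_def defset_def)
  qed
  have "sat (ustr U R) (envl xs as) \<phi> \<longleftrightarrow> sat (ustr U R) (\<lambda>j. ucls U R (G j)) \<phi>"
    using G(2) fv by (intro sat_cong) auto
  also have "\<dots> \<longleftrightarrow> {p. sat (frob_str (R p) p) (\<lambda>j. G j p) \<phi>} \<in> U"
    using G(1) fv by (intro los) auto
  also have "\<dots> \<longleftrightarrow> {p. map (\<lambda>g. g p) gs \<in> factor_defset R \<phi> n as p} \<in> U"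
    using primes_in_U factor by (rule Collect_in_U_cong) simp
  finally show ?thesis .
qed

lemma nth_map_urep_in:
  assumes "set xs \<subseteq> L_dom (ustr U R)" "i < length xs"
  shows "map urep xs ! i \<in> xs ! i"
proof -
  have "xs ! i \<in> L_dom (ustr U R)" using assms nth_mem by blast
  then show ?thesis using assms(2) by (simp add: urep_in)
qed

lemma internal_rep_defset_ustr:
  assumes "fv \<phi> \<subseteq> {..<n + length as}" "set as \<subseteq> L_dom (ustr U R)"
  shows "internal_rep U R n (defset (ustr U R) \<phi> n as) (factor_defset R \<phi> n as)"
  unfolding internal_rep_def
proof (intro conjI allI impI)
  show "factor_defset R \<phi> n as p \<subseteq> {xs. length xs = n \<and> set xs \<subseteq> carrier (R p)}" for p
    by (auto simp: factor_defset_def defset_def)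
  show "defset (ustr U R) \<phi> n as = {xs. length xs = n \<and> set xs \<subseteq> L_dom (ustr U R) \<and>
      (\<exists>gs. length gs = n \<and> (\<forall>i<n. gs ! i \<in> xs ! i) \<and>
        {p. map (\<lambda>g. g p) gs \<in> factor_defset R \<phi> n as p} \<in> U)}" (is "_ = ?I")
  proof (intro equalityI subsetI)
    fix xs assume "xs \<in> defset (ustr U R) \<phi> n as"
    then have xs: "length xs = n" "set xs \<subseteq> L_dom (ustr U R)" "sat (ustr U R) (envl xs as) \<phi>"
      by (auto simp: defset_def)
    have reps: "length (map urep xs) = n" "\<And>i. i < n \<Longrightarrow> map urep xs ! i \<in> xs ! i"
      using xs(1) nth_map_urep_in[OF xs(2)] by auto
    show "xs \<in> ?I"
      using xs reps sat_ustr_iff_factor_defset[OF assms xs(1,2) reps] by blast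
  next
    fix xs assume "xs \<in> ?I"
    then obtain gs where xs: "length xs = n" "set xs \<subseteq> L_dom (ustr U R)"
      and gs: "length gs = n" "\<And>i. i < n \<Longrightarrow> gs ! i \<in> xs ! i"
        "{p. map (\<lambda>g. g p) gs \<in> factor_defset R \<phi> n as p} \<in> U"
      by blast
    then show "xs \<in> defset (ustr U R) \<phi> n as"
      using sat_ustr_iff_factor_defset[OF assms xs gs(1,2)] by (simp add: defset_def)
  qed
qed

lemma factor_defset_nonempty:
  assumes "fv \<phi> \<subseteq> {..<n + length as}" "set as \<subseteq> L_dom (ustr U R)"
    and "defset (ustr U R) \<phi> n as \<noteq> {}"
  shows "{p. factor_defset R \<phi> n as p \<noteq> {}} \<in> U"
proof -
  obtain xs where xs: "length xs = n" "set xs \<subseteq> L_dom (ustr U R)" "sat (ustr U R) (envl xs as) \<phi>"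
    using assms(3) by (auto simp: defset_def)
  have reps: "length (map urep xs) = n" "\<And>i. i < n \<Longrightarrow> map urep xs ! i \<in> xs ! i"
    using xs(1) nth_map_urep_in[OF xs(2)] by auto
  have "{p. map (\<lambda>g. g p) (map urep xs) \<in> factor_defset R \<phi> n as p} \<in> U"
    using sat_ustr_iff_factor_defset[OF assms(1,2) xs(1,2) reps] xs(3) by simp
  then show ?thesis by (rule U_mono) blast
qed

end

theorem theorem2p10:
  fixes C :: "fm \<Rightarrow> nat \<Rightarrow> nat \<Rightarrow> real"
    and D :: "fm \<Rightarrow> nat \<Rightarrow> nat \<Rightarrow> (nat \<times> real) set"
    and U :: "nat set set"
    and R :: "nat \<Rightarrow> nat ring"
    and k :: "nat \<Rightarrow> nat"
    and \<phi> :: fm and n m :: nat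
    and as :: "(nat \<Rightarrow> nat) set list"
  assumes cdm: "cdm_constants C D"
    and uf: "nonprincipal_ultrafilter U" "{p. prime p} \<in> U"
    and fields: "\<forall>p. prime p \<longrightarrow> field (R p) \<and> card (carrier (R p)) = p ^ k p"
    and inS: "\<forall>p. prime p \<longrightarrow> real (k p) \<ge> fbound C D p p"
    and fvs: "fv \<phi> \<subseteq> {..<n+m}"
    and params: "length as = m" "set as \<subseteq> L_dom (ustr U R)"
    and nonempty: "defset (ustr U R) \<phi> n as \<noteq> {}"
  shows "\<exists>z::int. delta_F_is U R n (defset (ustr U R) \<phi> n as) (real_of_int z)"
proof -
  interpret ultraproduct U R
    using uf fields
    by (simp add: ultraproduct_def nonprincipal_uf_def ultraproduct_axioms_def field.is_ring)
  define r where "r p = ln (card (factor_defset R \<phi> n as p)) / ln (card (carrier (R p)))" for p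
  define close where "close d = {p. \<bar>r p - real d\<bar> \<le> 2 / ln p}" for d
  have \<phi>: "fv \<phi> \<subseteq> {..<n + length as}" using fvs params(1) by simp
  let ?good = "{p. prime p} \<inter> - {..<fsize \<phi> + n + m} \<inter> {p. factor_defset R \<phi> n as p \<noteq> {}}"
  have "?good \<in> U"
    by (intro U_int primes_in_U Compl_finite_in_U factor_defset_nonempty[OF \<phi> params(2) nonempty])
      simp
  moreover have "?good \<subseteq> (\<Union>d\<in>{..n}. close d)"
  proof
    fix p assume "p \<in> ?good"
    let ?as = "map (\<lambda>X. urep X p) as"
    have p: "prime p" "fsize \<phi> + n + length ?as \<le> p" "defset (frob_str (R p) p) \<phi> n ?as \<noteq> {}"
      using \<open>p \<in> ?good\<close> params(1) by (auto simp: factor_defset_def)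
    have "field (R p)" "card (carrier (R p)) = p ^ k p" "fbound C D p p \<le> k p"
      using fields inS p(1) by auto
    moreover have "fv \<phi> \<subseteq> {..<n + length ?as}" "set ?as \<subseteq> carrier (R p)"
      using \<phi> params(2) urep_in_carrier[OF _ p(1)] by auto
    ultimately have "\<exists>d\<le>n. \<bar>ln (card (defset (frob_str (R p) p) \<phi> n ?as))
        / ln (card (carrier (R p))) - real d\<bar> \<le> 2 / ln p"
      by (intro log_card_defset_near_integer[OF cdm _ _ p(1) _ p(2) _ _ p(3)])
    then obtain d where "d \<le> n" "p \<in> close d"
      unfolding close_def r_def factor_defset_def by auto
    then show "p \<in> (\<Union>d\<in>{..n}. close d)" by auto
  qed
  ultimately obtain d where "close d \<in> U"
    using finite_UN_in_U[of "{..n}" close] U_mono by blast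
  then have "st_is U r (real_of_int (int d))"
    using two_div_ln_tendsto_0 by (simp add: close_def st_is_if_close)
  then show ?thesis
    using internal_rep_defset_ustr[OF \<phi> params(2)] unfolding delta_F_is_def r_def by blast
qed

end
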